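(* Let $X$ be a topological space and $q,k\ge1$ integers. If $X$ has finitely many connected components and all of them are contractible, then $X^q_k$ also has finitely many connected components and all of them are contractible.
   Context: $X^q_k=\{(x_1,\dots,x_q)\in X^q:|\{x_1,\dots,x_q\}|\le k\}$, with the subspace topology of the product $X^q$. *)

theory Defs
  imports "HOL-Analysis.Analysis"
begin

definition power_space :: "'a topology \<Rightarrow> nat \<Rightarrow> (nat \<Rightarrow> 'a) topology" where
  "power_space X q = product_topology (\<lambda>_. X) {..<q}"

definition bounded_config_space :: "'a topology \<Rightarrow> nat \<Rightarrow> nat \<Rightarrow> (nat \<Rightarrow> 'a) topology" where
  "bounded_config_space X q k =
     subtopology (power_space X q) {x \<in> topspace (power_space X q). card (x ` {..<q}) \<le> k}"

end

theory Submission
  imports Defs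
begin

text \<open>
  The components of X are finitely many, hence open, so the contractions of the single
  components paste to one homotopy \<open>g\<^sub>t\<close> of X which starts at the identity, never leaves a
  component and ends at a map that is constant on each component. Applied coordinatewise,
  \<open>g\<^sub>t\<close> cannot increase the number of distinct coordinates, so it acts on \<open>X\<^sup>q\<^sub>k\<close>. The
  components of \<open>X\<^sup>q\<close> are products of components of X, and on the trace of each of them
  in \<open>X\<^sup>q\<^sub>k\<close> the coordinatewise homotopy is a contraction. These traces are therefore
  connected, so they are precisely the (finitely many) components of \<open>X\<^sup>q\<^sub>k\<close>.
\<close>

lemma homotopy_contracting_connected_components:
  assumes open_components: "\<And>C. C \<in> connected_components_of X \<Longrightarrow> openin X C"
    and contractible_components:
      "\<And>C. C \<in> connected_components_of X \<Longrightarrow> contractible_space (subtopology X C)"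
  obtains g where "continuous_map (prod_topology (top_of_set {0..1::real}) X) X g"
    and "\<And>x. x \<in> topspace X \<Longrightarrow> g (0, x) = x"
    and "\<And>t x. \<lbrakk>t \<in> {0..1}; x \<in> topspace X\<rbrakk> \<Longrightarrow> connected_component_of X x (g (t, x))"
    and "\<And>x y. connected_component_of X x y \<Longrightarrow> g (1, x) = g (1, y)"
proof -
  let ?I = "top_of_set {0..1::real}"
  have "\<exists>a h. continuous_map (prod_topology ?I (subtopology X C)) (subtopology X C) h \<and>
          (\<forall>x. h (0, x) = x) \<and> (\<forall>x. h (1, x) = a)"
    if "C \<in> connected_components_of X" for C
    using contractible_components [OF that] by (auto simp: contractible_space_def homotopic_with_def)
  then obtain a h where h:
    "\<And>C. C \<in> connected_components_of X \<Longrightarrow>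
       continuous_map (prod_topology ?I (subtopology X C)) (subtopology X C) (h C) \<and>
       (\<forall>x. h C (0, x) = x) \<and> (\<forall>x. h C (1, x) = a C)"
    by metis
  obtain g where g: "continuous_map (prod_topology ?I X) X g"
    and g_eq: "\<And>p C. \<lbrakk>C \<in> connected_components_of X; p \<in> topspace (prod_topology ?I X) \<inter> {0..1} \<times> C\<rbrakk>
                 \<Longrightarrow> g p = h C p"
  proof (rule pasting_lemma_exists [where T = "\<lambda>C. {0..1} \<times> C"])
    show "topspace (prod_topology ?I X) \<subseteq> (\<Union>C \<in> connected_components_of X. {0..1} \<times> C)"
      using Union_connected_components_of [of X] by auto
    show "openin (prod_topology ?I X) ({0..1} \<times> C)" if "C \<in> connected_components_of X" for C
      using open_components [OF that] by (simp add: openin_prod_Times_iff)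
    show "continuous_map (subtopology (prod_topology ?I X) ({0..1} \<times> C)) X (h C)"
      if "C \<in> connected_components_of X" for C
      using h [OF that] by (simp add: subtopology_Times subtopology_subtopology continuous_map_in_subtopology)
    show "h C p = h C' p"
      if "C \<in> connected_components_of X" "C' \<in> connected_components_of X"
        "p \<in> topspace (prod_topology ?I X) \<inter> {0..1} \<times> C \<inter> {0..1} \<times> C'" for C C' p
      using that connected_components_of_overlap by fastforce
  qed auto
  have g_component: "g (t, x) = h (connected_component_of_set X x) (t, x)"
    if "t \<in> {0..1}" "x \<in> topspace X" for t x
    using that by (intro g_eq) (auto simp: connected_components_of_def connected_component_of_refl)
  show thesis
  proof
    show "continuous_map (prod_topology ?I X) X g"
      by (fact g)
    show "g (0, x) = x" if "x \<in> topspace X" for x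
      using that g_component h by (simp add: connected_components_of_def)
    show "connected_component_of X x (g (t, x))" if "t \<in> {0..1}" "x \<in> topspace X" for t x
    proof -
      let ?C = "connected_component_of_set X x"
      have "?C \<in> connected_components_of X"
        using that by (simp add: connected_components_of_def)
      then have "h ?C (t, x) \<in> topspace (subtopology X ?C)"
        using h that continuous_map_image_subset_topspace
        by (fastforce simp: connected_component_of_refl)
      then show ?thesis
        using that g_component by simp
    qed
    show "g (1, x) = g (1, y)" if "connected_component_of X x y" for x y
      using that g_component h connected_component_in_topspace [OF that]
        connected_component_of_equiv [of X x y]
      by (simp add: connected_components_of_def)
  qed
qed

lemma finite_connected_components_of_product_topology:
  assumes "finite I" "\<And>i. i \<in> I \<Longrightarrow> finite (connected_components_of (X i))"
  shows "finite (connected_components_of (product_topology X I))"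
proof -
  have "connected_components_of (product_topology X I) =
          PiE I ` (\<Pi>\<^sub>E i\<in>I. connected_components_of (X i))"
    unfolding connected_components_of_product_topology
  proof (intro equalityI subsetI)
    fix F assume "F \<in> {PiE I B |B. \<forall>i\<in>I. B i \<in> connected_components_of (X i)}"
    then obtain B where "F = PiE I B" "\<forall>i\<in>I. B i \<in> connected_components_of (X i)"
      by blast
    moreover have "PiE I B = PiE I (restrict B I)"
      by (rule PiE_cong) simp
    ultimately show "F \<in> PiE I ` (\<Pi>\<^sub>E i\<in>I. connected_components_of (X i))"
      by (metis image_eqI restrict_PiE_iff)
  qed (auto simp: PiE_iff)
  then show ?thesis
    using assms by (simp add: finite_PiE)
qed

lemma connected_components_of_subtopology_Int_components:
  assumes "\<And>D. D \<in> connected_components_of W \<Longrightarrow> connectedin W (S \<inter> D)"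
  shows "connected_components_of (subtopology W S) =
           (\<lambda>D. S \<inter> D) ` {D \<in> connected_components_of W. S \<inter> D \<noteq> {}}"
proof -
  have component_eq: "connected_component_of_set (subtopology W S) x =
                        S \<inter> connected_component_of_set W x"
    if "x \<in> topspace W" "x \<in> S" for x
  proof
    show "connected_component_of_set (subtopology W S) x \<subseteq> S \<inter> connected_component_of_set W x"
      using connectedin_connected_component_of [of "subtopology W S" x]
        connected_component_of_maximal [of W _ x] that
      by (auto simp: connectedin_subtopology connected_component_of_refl)
    have "connectedin W (S \<inter> connected_component_of_set W x)"
      using assms that by (simp add: connected_components_of_def)
    then show "S \<inter> connected_component_of_set W x \<subseteq> connected_component_of_set (subtopology W S) x"
      using that by (intro connected_component_of_maximal)
        (auto simp: connectedin_subtopology connected_component_of_refl)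
  qed
  show ?thesis
  proof (intro equalityI subsetI)
    fix C assume "C \<in> connected_components_of (subtopology W S)"
    then obtain x where x: "x \<in> topspace W" "x \<in> S"
      and C: "C = connected_component_of_set (subtopology W S) x"
      by (auto simp: connected_components_of_def)
    moreover have "connected_component_of_set W x \<in> connected_components_of W"
      using x by (simp add: connected_components_of_def)
    moreover have "x \<in> S \<inter> connected_component_of_set W x"
      using x by (simp add: connected_component_of_refl)
    ultimately show "C \<in> (\<lambda>D. S \<inter> D) ` {D \<in> connected_components_of W. S \<inter> D \<noteq> {}}"
      using component_eq by blast
  next
    fix C assume "C \<in> (\<lambda>D. S \<inter> D) ` {D \<in> connected_components_of W. S \<inter> D \<noteq> {}}"
    then obtain z x where z: "z \<in> topspace W" and x: "x \<in> S" "connected_component_of W z x"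
      and C: "C = S \<inter> connected_component_of_set W z"
      by (auto simp: connected_components_of_def)
    then have "C = S \<inter> connected_component_of_set W x" "x \<in> topspace W"
      by (simp_all add: connected_component_of_equiv [of W z x])
    then show "C \<in> connected_components_of (subtopology W S)"
      using component_eq x by (auto simp: connected_components_of_def)
  qed
qed

lemma bounded_image_tuples_compose:
  assumes "finite I" "f \<in> topspace X \<rightarrow> topspace X"
    and "y \<in> {x \<in> topspace (product_topology (\<lambda>_. X) I). card (x ` I) \<le> k}"
  shows "(\<lambda>i\<in>I. f (y i)) \<in> {x \<in> topspace (product_topology (\<lambda>_. X) I). card (x ` I) \<le> k}"
proof -
  have "(\<lambda>i\<in>I. f (y i)) ` I = f ` y ` I"
    by (auto simp: image_iff)
  then have "card ((\<lambda>i\<in>I. f (y i)) ` I) \<le> card (y ` I)"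
    using assms(1) by (simp add: card_image_le)
  then show ?thesis
    using assms(2,3) by (auto simp: PiE_iff)
qed

lemma continuous_map_coordinatewise:
  assumes "continuous_map (prod_topology T X) X g"
  shows "continuous_map (prod_topology T (product_topology (\<lambda>_. X) I)) (product_topology (\<lambda>_. X) I)
           (\<lambda>(t, y). \<lambda>i\<in>I. g (t, y i))"
  unfolding continuous_map_componentwise
proof (intro conjI ballI)
  show "(\<lambda>(t, y). \<lambda>i\<in>I. g (t, y i)) ` topspace (prod_topology T (product_topology (\<lambda>_. X) I))
          \<subseteq> extensional I"
    by auto
  fix i assume "i \<in> I"
  have "continuous_map (prod_topology T (product_topology (\<lambda>_. X) I)) X (\<lambda>p. snd p i)"
    using continuous_map_compose [OF continuous_map_snd continuous_map_product_projection [OF \<open>i \<in> I\<close>]]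
    by (simp add: o_def)
  then have "continuous_map (prod_topology T (product_topology (\<lambda>_. X) I)) X (\<lambda>p. g (fst p, snd p i))"
    by (intro continuous_map_compose [OF _ assms, unfolded o_def] continuous_map_pairedI continuous_map_fst)
  then show "continuous_map (prod_topology T (product_topology (\<lambda>_. X) I)) X
               (\<lambda>p. (case p of (t, y) \<Rightarrow> \<lambda>i\<in>I. g (t, y i)) i)"
    using \<open>i \<in> I\<close> by (simp add: case_prod_unfold)
qed

lemma contractible_space_subtopology_by_homotopy:
  assumes G: "continuous_map (prod_topology (top_of_set {0..1::real}) W) W G"
    and G_into: "\<And>t y. \<lbrakk>t \<in> {0..1}; y \<in> T\<rbrakk> \<Longrightarrow> G (t, y) \<in> T"
    and G0: "\<And>y. y \<in> T \<Longrightarrow> G (0, y) = y"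
    and G1: "\<And>y. y \<in> T \<Longrightarrow> G (1, y) = c"
  shows "contractible_space (subtopology W T)"
  unfolding contractible_space_def
proof
  let ?I = "top_of_set {0..1::real}"
  have "prod_topology ?I (subtopology W T) = subtopology (prod_topology ?I W) ({0..1} \<times> T)"
    by (simp add: subtopology_Times subtopology_subtopology)
  then have "continuous_map (prod_topology ?I (subtopology W T)) (subtopology W T) G"
    using G G_into by (auto simp: continuous_map_in_subtopology continuous_map_from_subtopology)
  then show "homotopic_with (\<lambda>x. True) (subtopology W T) (subtopology W T) id (\<lambda>x. c)"
    using G0 G1 by (subst homotopic_with) (auto intro!: exI [of _ G])
qed

lemma contractible_Int_connected_component_of_power:
  fixes X :: "'a topology" and I :: "'i set"
  assumes open_components: "\<And>C. C \<in> connected_components_of X \<Longrightarrow> openin X C"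
    and contractible_components:
      "\<And>C. C \<in> connected_components_of X \<Longrightarrow> contractible_space (subtopology X C)"
    and S: "S \<subseteq> topspace (product_topology (\<lambda>_. X) I)"
    and S_stable: "\<And>f y. \<lbrakk>f \<in> topspace X \<rightarrow> topspace X; y \<in> S\<rbrakk> \<Longrightarrow> (\<lambda>i\<in>I. f (y i)) \<in> S"
    and D: "D \<in> connected_components_of (product_topology (\<lambda>_. X) I)"
  shows "contractible_space (subtopology (product_topology (\<lambda>_. X) I) (S \<inter> D))"
proof -
  let ?I = "top_of_set {0..1::real}"
  let ?W = "product_topology (\<lambda>_. X) I"
  obtain g where g: "continuous_map (prod_topology ?I X) X g"
    and g0: "\<And>x. x \<in> topspace X \<Longrightarrow> g (0, x) = x"
    and g_component: "\<And>t x. \<lbrakk>t \<in> {0..1}; x \<in> topspace X\<rbrakk> \<Longrightarrow> connected_component_of X x (g (t, x))"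
    and g1: "\<And>x y. connected_component_of X x y \<Longrightarrow> g (1, x) = g (1, y)"
    using homotopy_contracting_connected_components [OF open_components contractible_components]
    by blast
  obtain z where z: "z \<in> topspace ?W" and D_eq: "D = connected_component_of_set ?W z"
    using D by (auto simp: connected_components_of_def)
  have in_D: "y \<in> D \<longleftrightarrow> y \<in> extensional I \<and> (\<forall>i\<in>I. connected_component_of X (z i) (y i))" for y
    using z by (auto simp: D_eq connected_component_of_product_topology PiE_iff)
  define G where "G = (\<lambda>(t, y). \<lambda>i\<in>I. g (t, y i))"
  have G_apply: "G (t, y) = (\<lambda>i\<in>I. g (t, y i))" for t y
    by (simp add: G_def)
  show ?thesis
  proof (rule contractible_space_subtopology_by_homotopy)
    show "continuous_map (prod_topology ?I ?W) ?W G"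
      unfolding G_def using g by (rule continuous_map_coordinatewise)
    show "G (t, y) \<in> S \<inter> D" if "t \<in> {0..1}" "y \<in> S \<inter> D" for t y
    proof -
      have coords: "y i \<in> topspace X" if "i \<in> I" for i
        using S \<open>y \<in> S \<inter> D\<close> that by (auto simp: PiE_iff)
      have "(\<lambda>x. g (t, x)) \<in> topspace X \<rightarrow> topspace X"
        using g \<open>t \<in> {0..1}\<close> continuous_map_image_subset_topspace by fastforce
      then have "(\<lambda>i\<in>I. g (t, y i)) \<in> S"
        using S_stable \<open>y \<in> S \<inter> D\<close> by blast
      moreover have "connected_component_of X (z i) (g (t, y i))" if "i \<in> I" for i
        using connected_component_of_trans [OF _ g_component [OF \<open>t \<in> {0..1}\<close> coords [OF that]]]
          \<open>y \<in> S \<inter> D\<close> that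
        by (simp add: in_D)
      then have "(\<lambda>i\<in>I. g (t, y i)) \<in> D"
        by (simp add: in_D)
      ultimately show ?thesis
        by (simp add: G_apply)
    qed
    show "G (0, y) = y" if "y \<in> S \<inter> D" for y
    proof -
      have "y \<in> (\<Pi>\<^sub>E i\<in>I. topspace X)"
        using that S by auto
      then show ?thesis
        by (auto simp: G_apply g0 PiE_iff extensional_def fun_eq_iff)
    qed
    show "G (1, y) = (\<lambda>i\<in>I. g (1, z i))" if "y \<in> S \<inter> D" for y
      using that by (auto simp: G_apply in_D intro!: restrict_ext g1 [symmetric])
  qed
qed

theorem lemma5p12:
  fixes X :: "'a topology" and q k :: nat
  assumes "q \<ge> 1" and "k \<ge> 1"
    and "finite (connected_components_of X)"
    and "\<forall>C \<in> connected_components_of X. contractible_space (subtopology X C)"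
  shows "finite (connected_components_of (bounded_config_space X q k)) \<and>
         (\<forall>C \<in> connected_components_of (bounded_config_space X q k).
            contractible_space (subtopology (bounded_config_space X q k) C))"
proof -
  let ?W = "power_space X q"
  define S where "S = {x \<in> topspace ?W. card (x ` {..<q}) \<le> k}"
  have Y: "bounded_config_space X q k = subtopology ?W S"
    by (simp add: bounded_config_space_def S_def)
  have contractible: "contractible_space (subtopology ?W (S \<inter> D))"
    if "D \<in> connected_components_of ?W" for D
    unfolding power_space_def
  proof (rule contractible_Int_connected_component_of_power)
    show "openin X C" if "C \<in> connected_components_of X" for C
      using assms(3) that by (rule open_in_finite_connected_components)
    show "contractible_space (subtopology X C)" if "C \<in> connected_components_of X" for C
      using assms(4) that by blast
    show "S \<subseteq> topspace (product_topology (\<lambda>_. X) {..<q})"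
      by (auto simp: S_def power_space_def)
    show "D \<in> connected_components_of (product_topology (\<lambda>_. X) {..<q})"
      using that by (simp add: power_space_def)
    show "(\<lambda>i\<in>{..<q}. f (y i)) \<in> S" if "f \<in> topspace X \<rightarrow> topspace X" "y \<in> S" for f y
      using bounded_image_tuples_compose [OF finite_lessThan that(1)] that(2)
      unfolding S_def power_space_def by blast
  qed
  then have "connectedin ?W (S \<inter> D)" if "D \<in> connected_components_of ?W" for D
    using that by (auto simp: connectedin_def S_def contractible_imp_connected_space)
  then have components: "connected_components_of (subtopology ?W S) =
                  (\<lambda>D. S \<inter> D) ` {D \<in> connected_components_of ?W. S \<inter> D \<noteq> {}}"
    by (rule connected_components_of_subtopology_Int_components)
  have "finite (connected_components_of ?W)"
    using assms(3) by (simp add: power_space_def finite_connected_components_of_product_topology)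
  then show ?thesis
    unfolding Y components using contractible by (auto simp: subtopology_subtopology)
qed

end
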